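(* Let $s\geq 12$ and $n\geq \binom{s}{2}+s+1$ be integers. Then $$ex(n,\{K_{2,2},M_{s+1}\})=n+\binom{s}{2}-\left\lceil\frac{s}{2}\right\rceil.$$
   Context: All graphs are finite and simple. $ex(n,\mathscr{F})$ is the maximum number of edges of an $n$-vertex graph containing no member of the family $\mathscr{F}$ as a subgraph. $K_{2,2}$ is the complete bipartite graph with two parts of size $2$ (the 4-cycle), and $M_{s+1}$ is the matching of $s+1$ pairwise disjoint edges. *)

theory Defs
  imports Complex_Main
begin

definition is_graph :: "nat \<Rightarrow> nat set set \<Rightarrow> bool" where
  "is_graph n G \<longleftrightarrow> (\<forall>e\<in>G. e \<subseteq> {..<n} \<and> card e = 2)"

text \<open>H (given by its edge set, vertices = union of edges, no isolated vertices)
  is a subgraph of G: an injective vertex map sending edges of H to edges of G.\<close>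
definition subgraph_of :: "nat set set \<Rightarrow> nat set set \<Rightarrow> bool" where
  "subgraph_of H G \<longleftrightarrow> (\<exists>f. inj_on f (\<Union>H) \<and> (\<forall>e\<in>H. f ` e \<in> G))"

definition K22 :: "nat set set" where
  "K22 = {{0,2},{0,3},{1,2},{1,3}}"

definition matching_graph :: "nat \<Rightarrow> nat set set" where
  "matching_graph k = {{2*i, 2*i+1} | i. i < k}"

definition ex :: "nat \<Rightarrow> nat set set set \<Rightarrow> nat" where
  "ex n F = Max {card G | G. is_graph n G \<and> (\<forall>H\<in>F. \<not> subgraph_of H G)}"

end

theory Submission
  imports Defs "HOL-Analysis.Convex"
begin

text \<open>By the Tutte--Berge formula, if no matching has more than s edges there is a set
  X of vertices such that G - X splits into parts P without edges between them and
  |X| + \<Sum>\<lfloor>|P|/2\<rfloor> \<le> s. In a C4-free graph two vertices have at most one common neighbour, so at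
  most (|X| choose 2) + \<lfloor>|X|/2\<rfloor> + |V - X| edges meet X, and a part with 2m+1 vertices spans at most
  (2m+1)(1 + \<surd>(8m+1))/4 edges (Kovari--Sos--Turan). For s \<ge> 12 the latter is at most the share
  m/(s - |X|) of f(s) - f(|X|), where f(k) = (k choose 2) - \<lceil>k/2\<rceil>; summing gives at most n + f(s)
  edges (when X is empty, |V| = \<Sum>|P| pays for the parts instead).

  Take s vertices carrying a maximal matching, give every pair of them a private common
  neighbour and attach all remaining vertices to one of them. Every edge meets the s vertices, so
  there is no matching with s+1 edges, and the graph is C4-free with n + f(s) edges.\<close>

section \<open>Graphs and C4-free counting\<close>

definition nbr :: "'a set set \<Rightarrow> 'a \<Rightarrow> 'a set" where
  "nbr E a = {b. {a,b} \<in> E}"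

definition graph_on :: "'a set \<Rightarrow> 'a set set \<Rightarrow> bool" where
  "graph_on V E \<longleftrightarrow> finite V \<and> (\<forall>e\<in>E. e \<subseteq> V \<and> card e = 2)"

definition c4free :: "'a set set \<Rightarrow> bool" where
  "c4free E \<longleftrightarrow> (\<forall>a b. a \<noteq> b \<longrightarrow> card (nbr E a \<inter> nbr E b) \<le> 1)"

lemma nbr_sym: "b \<in> nbr E a \<longleftrightarrow> a \<in> nbr E b"
  by (simp add: nbr_def insert_commute)

lemma graph_on_finite_edges: "graph_on V E \<Longrightarrow> finite E"
  unfolding graph_on_def by (meson Pow_iff finite_Pow_iff finite_subset subsetI)

lemma graph_on_finite_subset: "graph_on V E \<Longrightarrow> S \<subseteq> V \<Longrightarrow> finite S"
  unfolding graph_on_def by (meson finite_subset)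

lemma nbr_subset: "graph_on V E \<Longrightarrow> nbr E a \<subseteq> V"
  unfolding graph_on_def nbr_def by auto

lemma not_in_nbr_self: "graph_on V E \<Longrightarrow> a \<notin> nbr E a"
  unfolding graph_on_def nbr_def by force

lemma graph_on_edgeE:
  assumes "graph_on V E" "e \<in> E"
  obtains a b where "a \<noteq> b" "e = {a,b}" "a \<in> V" "b \<in> V"
  using assms unfolding graph_on_def by (metis card_2_iff insert_subset)

lemma c4free_sum_choose_two_le:
  assumes G: "graph_on V E" and C: "c4free E" and S: "S \<subseteq> V" and T: "finite T"
  shows "(\<Sum>v\<in>T. card (nbr E v \<inter> S) choose 2) \<le> card S choose 2"
proof -
  have fS: "finite S" using G S by (rule graph_on_finite_subset)
  define Q where "Q v = {q. q \<subseteq> nbr E v \<inter> S \<and> card q = 2}" for v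
  have card_Q: "card (Q v) = card (nbr E v \<inter> S) choose 2" for v
    unfolding Q_def by (rule n_subsets) (use fS in auto)
  have finite_Q: "finite (Q v)" for v
    unfolding Q_def by (rule finite_subset[of _ "Pow S"]) (use fS in auto)
  \<comment> \<open>A pair of vertices has at most one common neighbour, so no pair lies in two sets Q v.\<close>
  have disjoint_Q: "Q v \<inter> Q w = {}" if "v \<noteq> w" for v w
  proof (rule ccontr)
    assume "Q v \<inter> Q w \<noteq> {}"
    then obtain q where q: "q \<in> Q v" "q \<in> Q w" by blast
    then have "card q = 2" unfolding Q_def by blast
    then obtain a b where ab: "q = {a,b}" "a \<noteq> b" by (meson card_2_iff)
    have "{v,w} \<subseteq> nbr E a \<inter> nbr E b" using q ab unfolding Q_def by (auto simp: nbr_sym)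
    moreover have "finite (nbr E a \<inter> nbr E b)"
      using G nbr_subset graph_on_finite_subset by (metis inf.coboundedI1)
    ultimately have "2 \<le> card (nbr E a \<inter> nbr E b)"
      using that by (metis card_2_iff card_mono)
    with C ab show False unfolding c4free_def by fastforce
  qed
  have "(\<Sum>v\<in>T. card (nbr E v \<inter> S) choose 2) = card (\<Union>v\<in>T. Q v)"
    by (simp add: card_UN_disjoint T finite_Q disjoint_Q card_Q)
  also have "\<dots> \<le> card {q. q \<subseteq> S \<and> card q = 2}"
    by (rule card_mono) (use fS in \<open>auto simp: Q_def\<close>)
  also have "\<dots> = card S choose 2" by (rule n_subsets[OF fS])
  finally show ?thesis .
qed

lemma card_nbr_Int_eq:
  assumes G: "graph_on V E"
  shows "card (nbr E v \<inter> S) = card {e\<in>E. v \<in> e \<and> e - {v} \<subseteq> S}"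
proof (rule bij_betw_same_card)
  show "bij_betw (\<lambda>b. {v,b}) (nbr E v \<inter> S) {e\<in>E. v \<in> e \<and> e - {v} \<subseteq> S}"
  proof (rule bij_betwI')
    fix b c assume "b \<in> nbr E v \<inter> S" "c \<in> nbr E v \<inter> S"
    then show "({v, b} = {v, c}) = (b = c)"
      using not_in_nbr_self[OF G, of v] by (auto simp: doubleton_eq_iff)
  next
    fix b assume "b \<in> nbr E v \<inter> S"
    then show "{v, b} \<in> {e\<in>E. v \<in> e \<and> e - {v} \<subseteq> S}" by (auto simp: nbr_def)
  next
    fix e assume e: "e \<in> {e\<in>E. v \<in> e \<and> e - {v} \<subseteq> S}"
    then obtain b where "e = {v,b}" "b \<noteq> v"
      by (auto elim: graph_on_edgeE[OF G] simp: doubleton_eq_iff)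
    with e show "\<exists>b\<in>nbr E v \<inter> S. e = {v, b}" by (auto simp: nbr_def)
  qed
qed

lemma handshake_within:
  assumes G: "graph_on V E" and S: "S \<subseteq> V"
  shows "(\<Sum>v\<in>S. card (nbr E v \<inter> S)) = 2 * card {e\<in>E. e \<subseteq> S}"
proof -
  let ?ES = "{e\<in>E. e \<subseteq> S}"
  have "card (nbr E v \<inter> S) = card {e\<in>?ES. v \<in> e}" if "v \<in> S" for v
    unfolding card_nbr_Int_eq[OF G] by (rule arg_cong[where f = card]) (use that in auto)
  then have "(\<Sum>v\<in>S. card (nbr E v \<inter> S)) = (\<Sum>v\<in>S. card {e\<in>?ES. v \<in> e})"
    by simp
  also have "\<dots> = 2 * card ?ES"
  proof (rule sum_multicount)
    show "finite S" using G S by (rule graph_on_finite_subset)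
    show "finite ?ES" using graph_on_finite_edges[OF G] by simp
    show "\<forall>e\<in>?ES. card {v\<in>S. v \<in> e} = 2"
    proof
      fix e assume e: "e \<in> ?ES"
      then have "{v\<in>S. v \<in> e} = e" by blast
      then show "card {v\<in>S. v \<in> e} = 2" using e G unfolding graph_on_def by auto
    qed
  qed
  finally show ?thesis .
qed

lemma handshake_between:
  assumes G: "graph_on V E" and T: "T \<subseteq> V" and ST: "S \<inter> T = {}"
  shows "(\<Sum>v\<in>T. card (nbr E v \<inter> S)) = card {e\<in>E. e \<inter> S \<noteq> {} \<and> e \<inter> T \<noteq> {}}"
proof -
  let ?EST = "{e\<in>E. e \<inter> S \<noteq> {} \<and> e \<inter> T \<noteq> {}}"
  have "card (nbr E v \<inter> S) = card {e\<in>?EST. v \<in> e}" if "v \<in> T" for v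
    unfolding card_nbr_Int_eq[OF G]
  proof (rule arg_cong[where f = card], intro set_eqI iffI)
    fix e assume e: "e \<in> {e\<in>?EST. v \<in> e}"
    then have "e \<in> E" by simp
    then obtain a b where "e = {a,b}" by (rule graph_on_edgeE[OF G])
    with e that ST show "e \<in> {e\<in>E. v \<in> e \<and> e - {v} \<subseteq> S}" by auto
  qed (use that G in \<open>auto elim: graph_on_edgeE\<close>)
  then have "(\<Sum>v\<in>T. card (nbr E v \<inter> S)) = (\<Sum>v\<in>T. card {e\<in>?EST. v \<in> e})"
    by simp
  also have "\<dots> = 1 * card ?EST"
  proof (rule sum_multicount)
    show "finite T" using G T by (rule graph_on_finite_subset)
    show "finite ?EST" using graph_on_finite_edges[OF G] by simp
    show "\<forall>e\<in>?EST. card {v\<in>T. v \<in> e} = 1"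
    proof
      fix e assume e: "e \<in> ?EST"
      then have "e \<in> E" by simp
      then obtain a b where "e = {a,b}" by (rule graph_on_edgeE[OF G])
      with e ST have "{v\<in>T. v \<in> e} = {a} \<or> {v\<in>T. v \<in> e} = {b}" by auto
      then show "card {v\<in>T. v \<in> e} = 1" by auto
    qed
  qed
  finally show ?thesis by simp
qed

lemma le_choose_two_add_one: "k \<le> (k choose 2) + 1"
  by (cases k) (simp_all add: numeral_2_eq_2)

lemma square_eq_choose_two: "k^2 = 2 * (k choose 2) + k"
  by (induction k) (simp_all add: numeral_2_eq_2 power2_eq_square)

lemma two_mult_choose_two: "2 * (k choose 2) = k * (k - 1)"
  by (induction k) (simp_all add: numeral_2_eq_2 algebra_simps)

lemma c4free_edges_within:
  assumes G: "graph_on V E" and C: "c4free E" and P: "P \<subseteq> V"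
  defines "m \<equiv> card {e\<in>E. e \<subseteq> P}"
  shows "4 * m^2 \<le> card P * (card P * (card P - 1) + 2 * m)"
proof -
  define d where "d v = card (nbr E v \<inter> P)" for v
  have degree_sum: "(\<Sum>v\<in>P. d v) = 2 * m"
    unfolding d_def m_def by (rule handshake_within[OF G P])
  have "(\<Sum>v\<in>P. (d v)^2) = 2 * (\<Sum>v\<in>P. d v choose 2) + (\<Sum>v\<in>P. d v)"
    by (simp add: square_eq_choose_two sum.distrib sum_distrib_left)
  also have "\<dots> \<le> card P * (card P - 1) + 2 * m"
  proof -
    have "(\<Sum>v\<in>P. d v choose 2) \<le> card P choose 2"
      unfolding d_def using G C P graph_on_finite_subset by (blast intro: c4free_sum_choose_two_le)
    then show ?thesis using degree_sum two_mult_choose_two[of "card P"] by linarith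
  qed
  finally have square_sum: "(\<Sum>v\<in>P. (d v)^2) \<le> card P * (card P - 1) + 2 * m" .
  have "(\<Sum>v\<in>P. real (d v) * 1)^2 \<le> (\<Sum>v\<in>P. (real (d v))^2) * (\<Sum>v\<in>P. 1^2)"
    by (rule Cauchy_Schwarz_ineq_sum)
  then have "real ((\<Sum>v\<in>P. d v)^2) \<le> real (card P * (\<Sum>v\<in>P. (d v)^2))"
    by (simp add: mult.commute)
  then have "(\<Sum>v\<in>P. d v)^2 \<le> card P * (\<Sum>v\<in>P. (d v)^2)"
    by (simp only: of_nat_le_iff)
  also have "\<dots> \<le> card P * (card P * (card P - 1) + 2 * m)"
    using square_sum by simp
  finally show ?thesis by (simp add: degree_sum power_mult_distrib)
qed

lemma c4free_edges_meeting:
  assumes G: "graph_on V E" and C: "c4free E" and X: "X \<subseteq> V"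
  shows "card {e\<in>E. e \<inter> X \<noteq> {}} \<le> (card X choose 2) + card X div 2 + card (V - X)"
proof -
  have fV: "finite V" using G unfolding graph_on_def by blast
  define d where "d v = card (nbr E v \<inter> X)" for v
  define Ein where "Ein = {e\<in>E. e \<subseteq> X}"
  define Eout where "Eout = {e\<in>E. e \<inter> X \<noteq> {} \<and> e \<inter> (V - X) \<noteq> {}}"
  have "{e\<in>E. e \<inter> X \<noteq> {}} \<subseteq> Ein \<union> Eout"
    using G unfolding graph_on_def Ein_def Eout_def by blast
  then have "card {e\<in>E. e \<inter> X \<noteq> {}} \<le> card (Ein \<union> Eout)"
    by (rule card_mono[rotated]) (simp add: Ein_def Eout_def graph_on_finite_edges[OF G])
  then have "card {e\<in>E. e \<inter> X \<noteq> {}} \<le> card Ein + card Eout"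
    using card_Un_le order_trans by blast
  moreover have "2 * card Ein \<le> 2 * (\<Sum>v\<in>X. d v choose 2) + card X"
  proof -
    have "2 * card Ein = (\<Sum>v\<in>X. d v)"
      unfolding d_def Ein_def by (rule handshake_within[OF G X, symmetric])
    also have "\<dots> \<le> (\<Sum>v\<in>X. 2 * (d v choose 2) + 1)"
      using le_choose_two_add_one by (intro sum_mono) (metis add_le_mono1 le_trans mult_2 le_add2)
    also have "\<dots> = 2 * (\<Sum>v\<in>X. d v choose 2) + card X"
      by (simp add: sum_Suc sum_distrib_left)
    finally show ?thesis .
  qed
  moreover have "card Eout \<le> (\<Sum>v\<in>V - X. d v choose 2) + card (V - X)"
  proof -
    have "card Eout = (\<Sum>v\<in>V - X. d v)"
      unfolding d_def Eout_def by (rule handshake_between[OF G, symmetric]) auto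
    also have "\<dots> \<le> (\<Sum>v\<in>V - X. (d v choose 2) + 1)"
      by (rule sum_mono) (rule le_choose_two_add_one)
    finally show ?thesis by (simp add: sum_Suc)
  qed
  moreover have "(\<Sum>v\<in>X. d v choose 2) + (\<Sum>v\<in>V - X. d v choose 2) \<le> card X choose 2"
    using c4free_sum_choose_two_le[OF G C X fV] sum.subset_diff[OF X fV, of "\<lambda>v. d v choose 2"]
    unfolding d_def by linarith
  ultimately show ?thesis by linarith
qed

section \<open>Maximum matchings and the Tutte--Berge witness\<close>

definition matching :: "'a set set \<Rightarrow> bool" where
  "matching M \<longleftrightarrow> pairwise disjnt M"

definition max_matching :: "'a set set \<Rightarrow> 'a set set \<Rightarrow> bool" where
  "max_matching E M \<longleftrightarrow> M \<subseteq> E \<and> matching M \<and> (\<forall>M'. M' \<subseteq> E \<longrightarrow> matching M' \<longrightarrow> card M' \<le> card M)"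

lemma matching_insert:
  "matching (insert e M) \<longleftrightarrow> matching M \<and> (\<forall>g\<in>M. g \<noteq> e \<longrightarrow> disjnt e g)"
  unfolding matching_def by (auto simp: pairwise_insert disjnt_sym)

lemma matching_subset: "matching M \<Longrightarrow> N \<subseteq> M \<Longrightarrow> matching N"
  unfolding matching_def by (rule pairwise_subset)

lemma matching_edges_disjoint: "matching M \<Longrightarrow> e \<in> M \<Longrightarrow> g \<in> M \<Longrightarrow> v \<in> e \<Longrightarrow> v \<in> g \<Longrightarrow> e = g"
  unfolding matching_def pairwise_def disjnt_def by blast

lemma max_matching_exists:
  assumes "finite E" shows "\<exists>M. max_matching E M"
proof -
  have "\<exists>M. (M \<subseteq> E \<and> matching M) \<and> (\<forall>M'. M' \<subseteq> E \<and> matching M' \<longrightarrow> card M' \<le> card M)"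
    by (rule ex_has_greatest_nat[where k = "{}" and b = "Suc (card E)"])
      (use assms in \<open>auto simp: matching_def less_Suc_eq_le intro: card_mono\<close>)
  then show ?thesis unfolding max_matching_def by blast
qed

lemma card_Union_matching:
  assumes "graph_on V E" "M \<subseteq> E" "matching M"
  shows "card (\<Union>M) = 2 * card M"
proof -
  have "card e = 2" if "e \<in> M" for e using assms that unfolding graph_on_def by blast
  then have "card (\<Union>M) = sum (\<lambda>_. 2) M"
    using assms(3) unfolding matching_def by (simp add: card_Union_disjoint card_ge_0_finite)
  then show ?thesis by simp
qed

lemma card_uncovered_max_matching:
  assumes G: "graph_on V E" and M: "max_matching E M"
  shows "card (V - \<Union>M) = card V - 2 * card M"
proof -
  have "\<Union>M \<subseteq> V" using G M unfolding graph_on_def max_matching_def by blast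
  then show ?thesis
    using G M card_Union_matching[of V E M] unfolding max_matching_def graph_on_def
    by (simp add: card_Diff_subset finite_subset)
qed

lemma max_matching_covers_edge:
  assumes "finite E" "max_matching E M" "{a,b} \<in> E"
  shows "a \<in> \<Union>M \<or> b \<in> \<Union>M"
proof (rule ccontr)
  assume uncovered: "\<not> (a \<in> \<Union>M \<or> b \<in> \<Union>M)"
  have "finite M" using assms unfolding max_matching_def by (meson finite_subset)
  moreover have "{a,b} \<notin> M" using uncovered by blast
  moreover have "matching (insert {a,b} M)" "insert {a,b} M \<subseteq> E"
    using assms(2,3) uncovered unfolding matching_insert max_matching_def disjnt_def by blast+
  then have "card (insert {a,b} M) \<le> card M" using assms(2) unfolding max_matching_def by blast
  ultimately show False by simp
qed

lemma graph_on_edge_at: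
  assumes "graph_on V E" "e \<in> E" "x \<in> e"
  obtains y where "e = {x,y}" "x \<noteq> y"
proof -
  obtain a b where ab: "a \<noteq> b" "e = {a,b}" by (rule graph_on_edgeE[OF assms(1,2)])
  show ?thesis
  proof (cases "x = a")
    case True
    then show ?thesis using that[of b] ab by blast
  next
    case False
    then have "x = b" "e = {x, a}" using assms(3) ab by auto
    then show ?thesis using that[of a] ab by blast
  qed
qed

text \<open>N' trades the N-edge at the M-partner x' of x for the M-edge {x, x'}.\<close>
lemma max_matching_swap:
  assumes G: "graph_on V E" and N: "max_matching E N" and M: "M \<subseteq> E" "matching M"
    and e: "e \<in> M" "x \<in> e" and x: "x \<notin> \<Union>N"
  shows "\<exists>N'. max_matching E N' \<and> \<Union>N' \<subseteq> insert x (\<Union>N) \<and> card (N \<inter> M) < card (N' \<inter> M)"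
proof -
  have fE: "finite E" using G by (rule graph_on_finite_edges)
  have NE: "N \<subseteq> E" "matching N" "finite N"
    using N fE unfolding max_matching_def by (auto intro: finite_subset)
  have "e \<in> E" using M(1) e(1) by blast
  then obtain x' where ex': "e = {x, x'}" "x \<noteq> x'" by (rule graph_on_edge_at[OF G _ e(2)])
  have "x' \<in> \<Union>N" using max_matching_covers_edge[OF fE N] M(1) e ex' x by blast
  then obtain f where f: "f \<in> N" "x' \<in> f" by blast
  have eN: "e \<notin> N" using e x by blast
  have fM: "f \<notin> M" using matching_edges_disjoint[OF M(2) _ e(1), of f x'] f ex' eN by blast
  define N' where "N' = insert e (N - {f})"
  have "disjnt e g" if g: "g \<in> N - {f}" for g
  proof -
    have "x \<notin> g" using g x by blast
    moreover have "x' \<notin> g" using g f matching_edges_disjoint[OF NE(2)] by blast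
    ultimately show ?thesis using ex'(1) by (simp add: disjnt_def)
  qed
  moreover have "matching (N - {f})" using NE(2) by (rule matching_subset) blast
  ultimately have "matching N'" unfolding N'_def matching_insert by blast
  moreover have "card N' = card N"
    unfolding N'_def using eN f NE(3) by (metis card_Suc_Diff1 card_insert_disjoint finite_Diff DiffD1)
  ultimately have "max_matching E N'"
    using N M(1) e(1) unfolding max_matching_def N'_def by auto
  moreover have "\<Union>N' \<subseteq> insert x (\<Union>N)" unfolding N'_def using ex' f by blast
  moreover have "N' \<inter> M = insert e (N \<inter> M)" unfolding N'_def using e(1) fM by blast
  then have "card (N \<inter> M) < card (N' \<inter> M)" using eN NE(3) by simp
  ultimately show ?thesis by blast
qed

definition connected_on :: "'a set \<Rightarrow> 'a set set \<Rightarrow> bool" where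
  "connected_on V E \<longleftrightarrow>
     (\<forall>A. A \<subseteq> V \<longrightarrow> A \<noteq> {} \<longrightarrow> A \<noteq> V \<longrightarrow> (\<exists>e\<in>E. e \<inter> A \<noteq> {} \<and> e - A \<noteq> {}))"

lemma connected_on_path:
  assumes G: "graph_on V E" and C: "connected_on V E" and a: "a \<in> V" and b: "b \<in> V"
  shows "(\<lambda>x y. {x,y} \<in> E)\<^sup>*\<^sup>* a b"
proof -
  let ?adj = "\<lambda>x y. {x,y} \<in> E"
  define R where "R = {b\<in>V. ?adj\<^sup>*\<^sup>* a b}"
  have "R = V"
  proof (rule ccontr)
    assume "R \<noteq> V"
    moreover have "R \<subseteq> V" "a \<in> R" unfolding R_def using a by auto
    ultimately obtain e where e: "e \<in> E" "e \<inter> R \<noteq> {}" "e - R \<noteq> {}"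
      using C unfolding connected_on_def by blast
    obtain p q where "e = {p,q}" "p \<in> V" "q \<in> V" using graph_on_edgeE[OF G e(1)] by metis
    with e have "{p,q} \<in> E \<and> p \<in> R \<and> q \<notin> R \<or> {q,p} \<in> E \<and> q \<in> R \<and> p \<notin> R"
      by (auto simp: insert_commute)
    then obtain p q where pq: "{p,q} \<in> E" "p \<in> R" "q \<notin> R" "q \<in> V"
      using \<open>p \<in> V\<close> \<open>q \<in> V\<close> by blast
    then have "?adj\<^sup>*\<^sup>* a q" unfolding R_def by (auto intro: rtranclp.rtrancl_into_rtrancl)
    then show False using pq unfolding R_def by blast
  qed
  then show ?thesis using b unfolding R_def by blast
qed

text \<open>Two maximum matchings miss equally many vertices.\<close>
lemma two_le_card_uncovered_diff:
  assumes G: "graph_on V E" and M: "max_matching E M" and N: "max_matching E N"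
    and uv: "u \<in> (V - \<Union>M) - (V - \<Union>N)" "v \<in> (V - \<Union>M) - (V - \<Union>N)" "u \<noteq> v"
  shows "2 \<le> card ((V - \<Union>N) - (V - \<Union>M))"
proof -
  define A B where "A = V - \<Union>M" and "B = V - \<Union>N"
  have fin: "finite A" "finite B" using G unfolding A_def B_def graph_on_def by auto
  have "card N = card M" using M N unfolding max_matching_def by (meson le_antisym)
  then have "card A = card B"
    unfolding A_def B_def card_uncovered_max_matching[OF G M] card_uncovered_max_matching[OF G N]
    by simp
  then have "card (B - A) = card (A - B)"
    using card_Int_Diff[OF fin(1), of B] card_Int_Diff[OF fin(2), of A] by (simp add: Int_commute)
  moreover have "{u,v} \<subseteq> A - B" using uv unfolding A_def B_def by blast
  then have "2 \<le> card (A - B)" using card_mono[of "A - B" "{u,v}"] fin uv(3) by simp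
  ultimately show ?thesis unfolding A_def B_def by simp
qed

text \<open>The core of Gallai's lemma, by induction along the path u w \<dots> v: pick a maximum matching N
  missing w that shares as many edges with M as possible; a swap at a vertex missed by N but not
  by M then produces a better N.\<close>
lemma max_matching_uncovered_path:
  assumes G: "graph_on V E" and hypo: "\<forall>v\<in>V. \<exists>N. max_matching E N \<and> v \<notin> \<Union>N"
    and path: "(\<lambda>x y. {x,y} \<in> E)\<^sup>*\<^sup>* u v"
  shows "max_matching E M \<Longrightarrow> u \<in> V - \<Union>M \<Longrightarrow> v \<in> V - \<Union>M \<Longrightarrow> u = v"
  using path
proof (induction arbitrary: M rule: converse_rtranclp_induct)
  case base
  then show ?case by simp
next
  case (step u w)
  have fE: "finite E" using G by (rule graph_on_finite_edges)
  have ME: "M \<subseteq> E" "matching M" "finite M"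
    using step.prems(1) fE unfolding max_matching_def by (auto intro: finite_subset)
  have wV: "w \<in> V" using G step.hyps(1) unfolding graph_on_def by blast
  obtain N where N: "max_matching E N" "w \<notin> \<Union>N"
    and best: "\<And>N'. max_matching E N' \<Longrightarrow> w \<notin> \<Union>N' \<Longrightarrow> card (N' \<inter> M) \<le> card (N \<inter> M)"
  proof -
    obtain N0 where "max_matching E N0 \<and> w \<notin> \<Union>N0" using hypo wV by blast
    then have "\<exists>N. (max_matching E N \<and> w \<notin> \<Union>N) \<and>
        (\<forall>N'. max_matching E N' \<and> w \<notin> \<Union>N' \<longrightarrow> card (N' \<inter> M) \<le> card (N \<inter> M))"
      using ME(3)
      by (intro ex_has_greatest_nat[where b = "Suc (card M)"]) (auto simp: less_Suc_eq_le card_mono)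
    then show thesis using that by blast
  qed
  show "u = v"
  proof (rule ccontr)
    assume "u \<noteq> v"
    have "u \<in> \<Union>N" using max_matching_covers_edge[OF fE N(1) step.hyps(1)] N(2) by blast
    have "v \<in> \<Union>N"
    proof (rule ccontr)
      assume "v \<notin> \<Union>N"
      then have "w = v" using step.IH[OF N(1)] wV N(2) step.prems(3) by blast
      then show False
        using max_matching_covers_edge[OF fE step.prems(1) step.hyps(1)] step.prems(2,3) by blast
    qed
    have "2 \<le> card ((V - \<Union>N) - (V - \<Union>M))"
      using two_le_card_uncovered_diff[OF G step.prems(1) N(1)] step.prems(2,3) \<open>u \<in> \<Union>N\<close>
        \<open>v \<in> \<Union>N\<close> \<open>u \<noteq> v\<close> by blast
    then have "\<not> (V - \<Union>N) - (V - \<Union>M) \<subseteq> {w}"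
      using card_mono[of "{w}" "(V - \<Union>N) - (V - \<Union>M)"] by auto
    then obtain x where x: "x \<in> V - \<Union>N" "x \<in> \<Union>M" "x \<noteq> w" by blast
    then obtain e where e: "e \<in> M" "x \<in> e" by blast
    obtain N' where N': "max_matching E N'" "\<Union>N' \<subseteq> insert x (\<Union>N)"
      "card (N \<inter> M) < card (N' \<inter> M)"
      using max_matching_swap[OF G N(1) ME(1,2) e] x by blast
    then show False using best[OF N'(1)] N(2) x(3) by fastforce
  qed
qed

lemma gallai_lemma:
  assumes G: "graph_on V E" and C: "connected_on V E"
    and hypo: "\<forall>v\<in>V. \<exists>N. max_matching E N \<and> v \<notin> \<Union>N" and M: "max_matching E M"
  shows "card (V - \<Union>M) \<le> 1"
proof -
  have "u = v" if "u \<in> V - \<Union>M" "v \<in> V - \<Union>M" for u v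
    using max_matching_uncovered_path[OF G hypo connected_on_path[OF G C] M] that by blast
  then show ?thesis
    using G unfolding graph_on_def by (simp add: card_le_Suc0_iff_eq)
qed

text \<open>The Tutte--Berge formula provides such a witness with the components of G - X as parts and
  with equality; only the inequality is needed here.\<close>
definition tutte_berge_witness :: "'a set \<Rightarrow> 'a set set \<Rightarrow> 'a set \<Rightarrow> 'a set set \<Rightarrow> bool" where
  "tutte_berge_witness V E X Ps \<longleftrightarrow>
     X \<subseteq> V \<and> finite Ps \<and> pairwise disjnt Ps \<and> \<Union>Ps = V - X \<and>
     (\<forall>e\<in>E. e \<inter> X = {} \<longrightarrow> (\<exists>P\<in>Ps. e \<subseteq> P)) \<and>
     (\<exists>M\<subseteq>E. matching M \<and> card X + (\<Sum>P\<in>Ps. card P div 2) \<le> card M)"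

lemma pairwise_disjnt_Un:
  assumes "pairwise disjnt S" "pairwise disjnt T" "\<forall>s\<in>S. s \<subseteq> A" "\<forall>t\<in>T. t \<subseteq> B" "A \<inter> B = {}"
  shows "pairwise disjnt (S \<union> T)"
  using assms unfolding pairwise_def disjnt_def by (metis Int_mono UnE inf_commute subset_empty)

lemma matching_Un_disjoint:
  assumes G: "graph_on V E" and MA: "MA \<subseteq> {e\<in>E. e \<subseteq> A}" "matching MA"
    and MB: "MB \<subseteq> {e\<in>E. e \<subseteq> B}" "matching MB" and AB: "A \<inter> B = {}"
  shows "matching (MA \<union> MB) \<and> card (MA \<union> MB) = card MA + card MB"
proof
  show "matching (MA \<union> MB)"
    using MA MB pairwise_disjnt_Un[of MA MB A B] AB unfolding matching_def by blast
  have "{} \<notin> E" using G unfolding graph_on_def by force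
  have "g \<notin> MB" if "g \<in> MA" for g
  proof
    assume "g \<in> MB"
    then have "g = {}" using that MA(1) MB(1) AB by blast
    then show False using \<open>{} \<notin> E\<close> that MA(1) by blast
  qed
  moreover have "finite MA" "finite MB"
    using MA(1) MB(1) graph_on_finite_edges[OF G] by (auto intro: finite_subset)
  ultimately show "card (MA \<union> MB) = card MA + card MB" by (simp add: card_Un_disjoint disjoint_iff)
qed

lemma tutte_berge_witness_Un:
  assumes G: "graph_on (A \<union> B) E" and AB: "A \<inter> B = {}" and split: "\<forall>e\<in>E. e \<subseteq> A \<or> e \<subseteq> B"
    and WA: "tutte_berge_witness A {e\<in>E. e \<subseteq> A} XA PsA"
    and WB: "tutte_berge_witness B {e\<in>E. e \<subseteq> B} XB PsB"
  shows "tutte_berge_witness (A \<union> B) E (XA \<union> XB) (PsA \<union> PsB)"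
proof -
  from WA obtain MA where XA: "XA \<subseteq> A" and PsA: "finite PsA" "pairwise disjnt PsA" "\<Union>PsA = A - XA"
    and EA: "\<forall>e\<in>E. e \<subseteq> A \<longrightarrow> e \<inter> XA = {} \<longrightarrow> (\<exists>P\<in>PsA. e \<subseteq> P)"
    and MA: "MA \<subseteq> {e\<in>E. e \<subseteq> A}" "matching MA" "card XA + (\<Sum>P\<in>PsA. card P div 2) \<le> card MA"
    unfolding tutte_berge_witness_def by auto
  from WB obtain MB where XB: "XB \<subseteq> B" and PsB: "finite PsB" "pairwise disjnt PsB" "\<Union>PsB = B - XB"
    and EB: "\<forall>e\<in>E. e \<subseteq> B \<longrightarrow> e \<inter> XB = {} \<longrightarrow> (\<exists>P\<in>PsB. e \<subseteq> P)"
    and MB: "MB \<subseteq> {e\<in>E. e \<subseteq> B}" "matching MB" "card XB + (\<Sum>P\<in>PsB. card P div 2) \<le> card MB"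
    unfolding tutte_berge_witness_def by auto
  have fin: "finite A" "finite B" using G unfolding graph_on_def by auto
  have matching: "matching (MA \<union> MB)" "card (MA \<union> MB) = card MA + card MB"
    using matching_Un_disjoint[OF G MA(1,2) MB(1,2) AB] by auto
  moreover have "finite XA" "finite XB" "XA \<inter> XB = {}"
    using XA XB AB fin(1,2) by (auto intro: finite_subset)
  then have "card (XA \<union> XB) = card XA + card XB" by (simp add: card_Un_disjoint)
  moreover have "(\<Sum>P\<in>PsA \<union> PsB. card P div 2) \<le> (\<Sum>P\<in>PsA. card P div 2) + (\<Sum>P\<in>PsB. card P div 2)"
    using PsA(1) PsB(1) by (simp add: sum_Un_nat)
  ultimately have "card (XA \<union> XB) + (\<Sum>P\<in>PsA \<union> PsB. card P div 2) \<le> card (MA \<union> MB)"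
    using MA(3) MB(3) matching(2) by linarith
  moreover have "pairwise disjnt (PsA \<union> PsB)"
    using pairwise_disjnt_Un[OF PsA(2) PsB(2) _ _ AB] PsA(3) PsB(3) by blast
  moreover have "\<exists>P\<in>PsA \<union> PsB. e \<subseteq> P" if "e \<in> E" "e \<inter> (XA \<union> XB) = {}" for e
  proof -
    from split that(1) consider "e \<subseteq> A" | "e \<subseteq> B" by blast
    then show ?thesis
    proof cases
      case 1
      then show ?thesis using EA that by blast
    next
      case 2
      then show ?thesis using EB that by blast
    qed
  qed
  moreover have "\<Union>(PsA \<union> PsB) = (A \<union> B) - (XA \<union> XB)"
    using PsA(3) PsB(3) XA XB AB by auto
  moreover have "XA \<union> XB \<subseteq> A \<union> B" "finite (PsA \<union> PsB)" "MA \<union> MB \<subseteq> E"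
    using XA XB PsA(1) PsB(1) MA(1) MB(1) by auto
  ultimately show ?thesis unfolding tutte_berge_witness_def using matching(1) by blast
qed

lemma tutte_berge_witness_insert:
  assumes G: "graph_on V E" and v: "v \<in> V" and covered: "\<And>M. max_matching E M \<Longrightarrow> v \<in> \<Union>M"
    and W: "tutte_berge_witness (V - {v}) {e\<in>E. v \<notin> e} X Ps"
  shows "tutte_berge_witness V E (insert v X) Ps"
proof -
  obtain M where M: "M \<subseteq> {e\<in>E. v \<notin> e}" "matching M" "card X + (\<Sum>P\<in>Ps. card P div 2) \<le> card M"
    using W unfolding tutte_berge_witness_def by blast
  obtain M0 where M0: "max_matching E M0" using max_matching_exists[OF graph_on_finite_edges[OF G]] by blast
  have "card M < card M0"
  proof (rule ccontr)
    assume "\<not> card M < card M0"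
    then have "max_matching E M" using M M0 unfolding max_matching_def by auto
    then show False using covered M(1) by blast
  qed
  moreover have "finite X" "v \<notin> X"
    using W G unfolding tutte_berge_witness_def graph_on_def by (auto intro: finite_subset)
  ultimately have "card (insert v X) + (\<Sum>P\<in>Ps. card P div 2) \<le> card M0" using M(3) by simp
  then show ?thesis
    using W M0 v unfolding tutte_berge_witness_def max_matching_def by auto
qed

lemma tutte_berge_witness_factor_critical:
  assumes G: "graph_on V E" and C: "connected_on V E"
    and hypo: "\<forall>v\<in>V. \<exists>N. max_matching E N \<and> v \<notin> \<Union>N"
  shows "tutte_berge_witness V E {} {V}"
proof -
  obtain M where M: "max_matching E M" using max_matching_exists[OF graph_on_finite_edges[OF G]] by blast
  have "card (V - \<Union>M) \<le> 1" by (rule gallai_lemma[OF G C hypo M])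
  then have "card V div 2 \<le> card M" using card_uncovered_max_matching[OF G M] by linarith
  then show ?thesis
    using M G unfolding tutte_berge_witness_def max_matching_def graph_on_def by auto
qed

lemma tutte_berge_witness_exists:
  "graph_on V E \<Longrightarrow> \<exists>X Ps. tutte_berge_witness V E X Ps"
proof (induction "card V" arbitrary: V E rule: less_induct)
  case less
  note G = less.prems
  have fV: "finite V" using G unfolding graph_on_def by blast
  consider "V = {}" | "\<not> connected_on V E" | "\<exists>v\<in>V. \<forall>M. max_matching E M \<longrightarrow> v \<in> \<Union>M"
    | "V \<noteq> {}" "connected_on V E" "\<forall>v\<in>V. \<exists>N. max_matching E N \<and> v \<notin> \<Union>N"
    by blast
  then show ?case
  proof cases
    case 1
    then have "tutte_berge_witness V E {} {}"
      using G unfolding tutte_berge_witness_def graph_on_def matching_def by auto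
    then show ?thesis by blast
  next
    case 2
    then obtain A where A: "A \<subseteq> V" "A \<noteq> {}" "A \<noteq> V"
      and no_cross: "\<forall>e\<in>E. e \<inter> A = {} \<or> e \<subseteq> A"
      unfolding connected_on_def by blast
    have split: "\<forall>e\<in>E. e \<subseteq> A \<or> e \<subseteq> V - A"
      using no_cross G unfolding graph_on_def by blast
    have "card A < card V" "card (V - A) < card V"
      using A fV by (auto intro: psubset_card_mono)
    moreover have "graph_on A {e\<in>E. e \<subseteq> A}" "graph_on (V - A) {e\<in>E. e \<subseteq> V - A}"
      using G fV A(1) unfolding graph_on_def by (auto intro: finite_subset)
    ultimately obtain XA PsA XB PsB where
      "tutte_berge_witness A {e\<in>E. e \<subseteq> A} XA PsA"
      "tutte_berge_witness (V - A) {e\<in>E. e \<subseteq> V - A} XB PsB"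
      using less.hyps by meson
    then have "tutte_berge_witness (A \<union> (V - A)) E (XA \<union> XB) (PsA \<union> PsB)"
      using G A(1) split by (intro tutte_berge_witness_Un) (auto simp: Un_absorb1)
    then show ?thesis using A(1) by (metis Un_Diff_cancel Un_absorb1)
  next
    case 3
    then obtain v where v: "v \<in> V" "\<And>M. max_matching E M \<Longrightarrow> v \<in> \<Union>M" by blast
    have "card (V - {v}) < card V" using fV v(1) by (rule card_Diff1_less)
    moreover have "graph_on (V - {v}) {e\<in>E. v \<notin> e}" using G unfolding graph_on_def by auto
    ultimately obtain X Ps where "tutte_berge_witness (V - {v}) {e\<in>E. v \<notin> e} X Ps"
      using less.hyps by meson
    then show ?thesis using tutte_berge_witness_insert[OF G v] by blast
  next
    case 4
    then show ?thesis using tutte_berge_witness_factor_critical[OF G] by blast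
  qed
qed

section \<open>Kovari--Sos--Turan arithmetic\<close>

text \<open>The squared form of r(2m+1)(1 + \<surd>(8m+1)) \<le> 4Fm. A C4-free graph on 2m+1 vertices has at
  most (2m+1)(1 + \<surd>(8m+1))/4 edges (Kovari--Sos--Turan), so this says it has at most Fm/r edges.\<close>
definition kst_dominated :: "int \<Rightarrow> int \<Rightarrow> int \<Rightarrow> bool" where
  "kst_dominated r m F \<longleftrightarrow>
     r * (2*m + 1) \<le> 4*F*m \<and> (r * (2*m + 1))^2 * (8*m + 1) \<le> (4*F*m - r * (2*m + 1))^2"

lemma kst_dominated_mono:
  assumes "kst_dominated r m F" "0 \<le> m" "F \<le> F'"
  shows "kst_dominated r m F'"
proof -
  have "4*F*m \<le> 4*F'*m" using assms(2,3) by (simp add: mult_right_mono)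
  then show ?thesis
    using assms(1) unfolding kst_dominated_def by (smt (verit) power_mono)
qed

text \<open>At r = m = 11 the inequality holds with a relative margin below 0.1 percent, which is why small r
  are checked case by case.\<close>
lemma kst_dominated_small:
  fixes r m :: int
  assumes "1 \<le> m" "m \<le> r" "r \<le> 11"
  shows "kst_dominated r m (r * (22 - r) div 2)"
proof -
  have "r = 1 \<or> r = 2 \<or> r = 3 \<or> r = 4 \<or> r = 5 \<or> r = 6 \<or> r = 7 \<or> r = 8 \<or> r = 9 \<or> r = 10 \<or> r = 11"
    "m = 1 \<or> m = 2 \<or> m = 3 \<or> m = 4 \<or> m = 5 \<or> m = 6 \<or> m = 7 \<or> m = 8 \<or> m = 9 \<or> m = 10 \<or> m = 11"
    using assms by presburger+
  then show ?thesis using assms(2) unfolding kst_dominated_def by (elim disjE) simp_all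
qed

lemma kst_large_estimate:
  fixes r m :: int
  assumes r: "12 \<le> r" and m: "1 \<le> m" "m \<le> r"
  shows "0 \<le> 2*r*m - 2*m - 3 \<and> (2*m + 1)^2 * (8*m + 1) \<le> (2*r*m - 2*m - 3)^2"
proof (cases "m \<le> 12")
  case True
  have "m = 1 \<or> m = 2 \<or> m = 3 \<or> m = 4 \<or> m = 5 \<or> m = 6 \<or> m = 7 \<or> m = 8 \<or> m = 9 \<or> m = 10 \<or>
      m = 11 \<or> m = 12"
    using m True by presburger
  then have "(2*m + 1)^2 * (8*m + 1) \<le> (22*m - 3)^2" by (elim disjE) simp_all
  moreover have "0 \<le> 22*m - 3" "22*m - 3 \<le> 2*r*m - 2*m - 3"
    using r m by (simp_all add: mult_right_mono)
  ultimately show ?thesis by (smt (verit) power_mono)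
next
  case False
  have "(2*m*m - 2*m - 3)^2 - (2*m + 1)^2 * (8*m + 1) = 4*(m*m)*((m - 11)*(m + 1)) + 8"
    by (simp add: algebra_simps power2_eq_square)
  moreover have "0 \<le> 4*(m*m)*((m - 11)*(m + 1))" using False by simp
  moreover have "12*m \<le> m*m" "m*m \<le> r*m" using m False by (simp_all add: mult_right_mono)
  then have "0 \<le> 2*m*m - 2*m - 3" "2*m*m - 2*m - 3 \<le> 2*r*m - 2*m - 3" using m by linarith+
  ultimately show ?thesis by (smt (verit) power_mono)
qed

lemma kst_dominated_large:
  fixes r m F :: int
  assumes r: "12 \<le> r" and m: "1 \<le> m" "m \<le> r" and F: "r^2 - 1 \<le> 2*F"
  shows "kst_dominated r m F"
proof -
  define B where "B = 2*r*m - 2*m - 3"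
  have B: "0 \<le> B" "(2*m + 1)^2 * (8*m + 1) \<le> B^2"
    using kst_large_estimate[OF r m] unfolding B_def by auto
  have "2 * (r^2 - 1) * m \<le> 4*F*m" using F m by (simp add: mult_right_mono)
  moreover have "r * B \<le> 2 * (r^2 - 1) * m - r * (2*m + 1)"
    using m unfolding B_def by (simp add: algebra_simps power2_eq_square)
  moreover have "0 \<le> r * B" using B r by simp
  moreover have "(r * (2*m + 1))^2 * (8*m + 1) \<le> (r * B)^2"
    using B by (simp add: power_mult_distrib mult_left_mono mult.assoc)
  ultimately show ?thesis
    unfolding kst_dominated_def by (smt (verit) power_mono)
qed

lemma kst_dominated_if:
  fixes r m q F :: int
  assumes m: "1 \<le> m" "m \<le> r" and q: "r < q" "12 \<le> q" and F: "r * (2*q - r - 2) \<le> 2*F + 1"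
  shows "kst_dominated r m F"
proof (cases "r \<le> 11")
  case True
  have "r * (22 - r) \<le> r * (2*q - r - 2)" using q m by (simp add: mult_left_mono)
  then have "r * (22 - r) div 2 \<le> F" using F by linarith
  then show ?thesis
    using kst_dominated_mono[OF kst_dominated_small[OF m True]] m by simp
next
  case False
  have "r * r \<le> r * (2*q - r - 2)" using q m by (simp add: mult_left_mono)
  then have "r^2 - 1 \<le> 2*F" using F by (simp add: power2_eq_square)
  then show ?thesis using kst_dominated_large[of r m F] False m by simp
qed

lemma edges_le_if_kst_dominated:
  fixes e c m r F :: int
  assumes kst: "4*e^2 \<le> c * (c * (c - 1) + 2*e)" and e: "0 \<le> e" and c: "0 \<le> c" "c \<le> 2*m + 1"
    and m: "1 \<le> m" and r: "0 \<le> r" and dom: "kst_dominated r m F"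
  shows "r * e \<le> F * m"
proof -
  define t where "t = 2*m + 1"
  have "4*e^2 - 2*e*t \<le> 4*e^2 - 2*e*c" using e c t_def by (simp add: mult_left_mono)
  also have "\<dots> \<le> c^2 * (c - 1)" using kst by (simp add: algebra_simps power2_eq_square)
  also have "\<dots> \<le> t^2 * (t - 1)"
  proof (cases "c = 0")
    case False
    have "c^2 \<le> t^2" using c t_def by (simp add: power_mono)
    moreover have "c - 1 \<le> t - 1" "0 \<le> c - 1" using False c t_def by simp_all
    ultimately show ?thesis by (intro mult_mono) simp_all
  next
    case True
    have "0 \<le> t - 1" using m t_def by simp
    then show ?thesis using True by simp
  qed
  finally have quadratic: "4*e^2 - 2*e*t \<le> t^2 * (t - 1)" .
  have "(4*e - t)^2 = 4 * (4*e^2 - 2*e*t) + t^2" by (simp add: algebra_simps power2_eq_square)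
  also have "\<dots> \<le> 4 * (t^2 * (t - 1)) + t^2" using quadratic by simp
  also have "\<dots> = t^2 * (8*m + 1)" unfolding t_def by (simp add: algebra_simps power2_eq_square)
  finally have "(4*e - t)^2 \<le> t^2 * (8*m + 1)" .
  then have "r^2 * (4*e - t)^2 \<le> r^2 * (t^2 * (8*m + 1))" by (simp add: mult_left_mono)
  then have "(r * (4*e - t))^2 \<le> (r*t)^2 * (8*m + 1)" by (simp add: power_mult_distrib mult.assoc)
  also have "\<dots> \<le> (4*F*m - r*t)^2" using dom unfolding kst_dominated_def t_def by simp
  finally have "(r * (4*e - t))^2 \<le> (4*F*m - r*t)^2" .
  moreover have "0 \<le> 4*F*m - r*t" using dom unfolding kst_dominated_def t_def by simp
  ultimately have "r * (4*e - t) \<le> 4*F*m - r*t" by (rule power2_le_imp_le)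
  then show ?thesis by (simp add: algebra_simps)
qed

section \<open>The upper bound\<close>

lemma card_edges_within_eq_0:
  assumes G: "graph_on V E" and P: "P \<subseteq> V" "card P \<le> 1"
  shows "card {e\<in>E. e \<subseteq> P} = 0"
proof -
  have "\<not> e \<subseteq> P" if "e \<in> E" for e
  proof
    assume "e \<subseteq> P"
    then have "card e \<le> card P" using G P(1) by (meson card_mono graph_on_finite_subset)
    then show False using G P(2) that unfolding graph_on_def by auto
  qed
  then have "{e\<in>E. e \<subseteq> P} = {}" by blast
  then show ?thesis by (simp only: card.empty)
qed

lemma c4free_part_edges_le:
  assumes G: "graph_on V E" and C: "c4free E" and P: "P \<subseteq> V" and m: "card P div 2 \<le> r"
    and q: "r < q" "12 \<le> q" and F: "int r * (2 * int q - int r - 2) \<le> 2*F + 1"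
  shows "int r * int (card {e\<in>E. e \<subseteq> P}) \<le> F * int (card P div 2)"
proof (cases "card P div 2 = 0")
  case True
  then have "card P \<le> 1" by presburger
  then show ?thesis using card_edges_within_eq_0[OF G P] by simp
next
  case False
  define c e where "c = card P" and "e = card {e\<in>E. e \<subseteq> P}"
  have m_bounds: "1 \<le> int (c div 2)" "int (c div 2) \<le> int r"
    using False m unfolding c_def by simp_all
  then have dominated: "kst_dominated (int r) (int (c div 2)) F"
    using q F by (intro kst_dominated_if[where q = "int q"]) simp_all
  have "int (4 * e^2) \<le> int (c * (c * (c - 1) + 2 * e))"
    using c4free_edges_within[OF G C P] unfolding c_def e_def by (simp only: of_nat_le_iff)
  then have kst: "4 * (int e)^2 \<le> int c * (int c * (int c - 1) + 2 * int e)"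
    by (cases c) (simp_all add: algebra_simps)
  have "c \<le> 2 * (c div 2) + 1" by presburger
  then have "int c \<le> 2 * int (c div 2) + 1" by linarith
  from edges_le_if_kst_dominated[OF kst _ _ this m_bounds(1) _ dominated]
  have "int r * int e \<le> F * int (c div 2)" by simp
  then show ?thesis unfolding c_def e_def .
qed

lemma c4free_parts_edges_le:
  assumes G: "graph_on V E" and C: "c4free E" and Ps: "finite Ps" "\<forall>P\<in>Ps. P \<subseteq> V"
    and m: "(\<Sum>P\<in>Ps. card P div 2) \<le> r" and q: "r < q" "12 \<le> q"
    and F: "int r * (2 * int q - int r - 2) \<le> 2*F + 1"
  shows "int (\<Sum>P\<in>Ps. card {e\<in>E. e \<subseteq> P}) \<le> F"
proof (cases "r = 0")
  case True
  have "card {e\<in>E. e \<subseteq> P} = 0" if "P \<in> Ps" for P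
  proof -
    have "card P div 2 = 0" using m Ps(1) that True by simp
    then have "card P \<le> 1" by presburger
    then show ?thesis using card_edges_within_eq_0[OF G] Ps(2) that by blast
  qed
  then show ?thesis using F True by simp
next
  case False
  have "0 \<le> F"
  proof -
    have "int r * int r \<le> int r * (2 * int q - int r - 2)" using q by (simp add: mult_left_mono)
    moreover have "1 \<le> int r * int r" using mult_mono[of 1 "int r" 1 "int r"] False by simp
    ultimately show ?thesis using F by linarith
  qed
  have "int r * int (\<Sum>P\<in>Ps. card {e\<in>E. e \<subseteq> P}) = (\<Sum>P\<in>Ps. int r * int (card {e\<in>E. e \<subseteq> P}))"
    by (simp add: sum_distrib_left)
  also have "\<dots> \<le> (\<Sum>P\<in>Ps. F * int (card P div 2))"
  proof (rule sum_mono)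
    fix P assume P: "P \<in> Ps"
    have "card P div 2 \<le> r"
      using m member_le_sum[OF P, of "\<lambda>P. card P div 2"] Ps(1) by simp
    moreover have "P \<subseteq> V" using Ps(2) P by blast
    ultimately show "int r * int (card {e\<in>E. e \<subseteq> P}) \<le> F * int (card P div 2)"
      using c4free_part_edges_le[OF G C _ _ q F] by blast
  qed
  also have "\<dots> = F * int (\<Sum>P\<in>Ps. card P div 2)" by (simp add: sum_distrib_left)
  also have "\<dots> \<le> F * int r" using m \<open>0 \<le> F\<close> by (simp only: of_nat_le_iff mult_left_mono)
  finally show ?thesis using False by (simp add: mult.commute)
qed

text \<open>The excess of the extremal number over n; here (s + 1) div 2 = \<lceil>s/2\<rceil>.\<close>
definition excess :: "nat \<Rightarrow> int" where
  "excess s = int (s choose 2) - int ((s + 1) div 2)"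

lemma two_mult_choose_two_int: "2 * int (k choose 2) = int k * (int k - 1)"
proof -
  have "int (2 * (k choose 2)) = int (k * (k - 1))" by (simp only: two_mult_choose_two)
  then show ?thesis by (cases k) (simp_all add: algebra_simps)
qed

lemma two_excess_ge: "int s * int s - 2 * int s - 1 \<le> 2 * excess s"
proof -
  have "2 * int (s choose 2) = int s * (int s - 1)" by (rule two_mult_choose_two_int)
  then show ?thesis unfolding excess_def by (simp add: algebra_simps)
qed

lemma excess_diff_ge:
  assumes "r \<le> s"
  shows "int r * (2 * int s - int r - 2) \<le> 2 * (excess s - excess (s - r)) + 1"
proof -
  have "2 * (excess s - excess (s - r)) = int s * (int s - 1) - int (s - r) * (int (s - r) - 1)
      - 2 * int ((s + 1) div 2) + 2 * int ((s - r + 1) div 2)"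
    unfolding excess_def using two_mult_choose_two_int[of s] two_mult_choose_two_int[of "s - r"] by simp
  moreover have "2 * int ((s + 1) div 2) \<le> int s + 1" "int (s - r) \<le> 2 * int ((s - r + 1) div 2)"
    by linarith+
  ultimately show ?thesis using assms by (simp add: algebra_simps)
qed

lemma card_edges_le_barrier:
  assumes "finite E" "finite Ps" "\<forall>e\<in>E. e \<inter> X = {} \<longrightarrow> (\<exists>P\<in>Ps. e \<subseteq> P)"
  shows "card E \<le> card {e\<in>E. e \<inter> X \<noteq> {}} + (\<Sum>P\<in>Ps. card {e\<in>E. e \<subseteq> P})"
proof -
  have "E \<subseteq> {e\<in>E. e \<inter> X \<noteq> {}} \<union> (\<Union>P\<in>Ps. {e\<in>E. e \<subseteq> P})" using assms(3) by blast
  then have "card E \<le> card ({e\<in>E. e \<inter> X \<noteq> {}} \<union> (\<Union>P\<in>Ps. {e\<in>E. e \<subseteq> P}))"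
    using assms(1,2) by (intro card_mono) auto
  also have "\<dots> \<le> card {e\<in>E. e \<inter> X \<noteq> {}} + card (\<Union>P\<in>Ps. {e\<in>E. e \<subseteq> P})"
    by (rule card_Un_le)
  also have "card (\<Union>P\<in>Ps. {e\<in>E. e \<subseteq> P}) \<le> (\<Sum>P\<in>Ps. card {e\<in>E. e \<subseteq> P})"
    using assms(2) by (rule card_UN_le)
  finally show ?thesis by simp
qed

lemma c4free_edges_le_empty_barrier:
  assumes G: "graph_on V E" and C: "c4free E" and W: "tutte_berge_witness V E {} Ps"
    and budget: "(\<Sum>P\<in>Ps. card P div 2) \<le> s" and s: "12 \<le> s"
  shows "int (card E) \<le> int (card V) + excess s"
proof -
  define t where "t = (\<Sum>P\<in>Ps. card P div 2)"
  have Ps: "finite Ps" "pairwise disjnt Ps" "\<Union>Ps = V" "\<forall>P\<in>Ps. P \<subseteq> V"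
    and inside: "\<forall>e\<in>E. \<exists>P\<in>Ps. e \<subseteq> P"
    using W unfolding tutte_berge_witness_def by auto
  have "int t * (2 * int (s + 1) - int t - 2) \<le> 2 * (excess s + 2 * int t) + 1"
  proof (cases "t = 0")
    case False
    define d where "d = (int s - int t - 1)^2"
    have "int t * (2 * int (s + 1) - int t - 2) = int s * int s - 2 * int s + 2 * int t + 1 - d"
      unfolding d_def by (simp add: power2_eq_square algebra_simps)
    moreover have "0 \<le> d" "1 \<le> int t" unfolding d_def using False by simp_all
    ultimately show ?thesis using two_excess_ge[of s] by simp
  next
    case True
    have "12 * int s \<le> int s * int s" using s by (simp add: mult_right_mono)
    then show ?thesis using True two_excess_ge[of s] by simp
  qed
  moreover have "(\<Sum>P\<in>Ps. card P div 2) \<le> t" "t < s + 1" "12 \<le> s + 1"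
    using budget s unfolding t_def by simp_all
  ultimately have "int (\<Sum>P\<in>Ps. card {e\<in>E. e \<subseteq> P}) \<le> excess s + 2 * int t"
    using c4free_parts_edges_le[OF G C Ps(1,4)] by blast
  moreover have "2 * t \<le> card V"
  proof -
    have "2 * t \<le> (\<Sum>P\<in>Ps. card P)" unfolding t_def sum_distrib_left by (intro sum_mono) simp
    also have "\<dots> = card V"
      using Ps G by (metis card_Union_disjoint graph_on_finite_subset)
    finally show ?thesis .
  qed
  moreover have "card E \<le> (\<Sum>P\<in>Ps. card {e\<in>E. e \<subseteq> P})"
    using card_edges_le_barrier[OF graph_on_finite_edges[OF G] Ps(1), of "{}"] inside by simp
  ultimately show ?thesis by linarith
qed

lemma c4free_edges_le_barrier:
  assumes G: "graph_on V E" and C: "c4free E" and W: "tutte_berge_witness V E X Ps" and X: "X \<noteq> {}"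
    and budget: "card X + (\<Sum>P\<in>Ps. card P div 2) \<le> s" and s: "12 \<le> s"
  shows "int (card E) \<le> int (card V) + excess s"
proof -
  define x where "x = card X"
  have XV: "X \<subseteq> V" and Ps: "finite Ps" "\<forall>P\<in>Ps. P \<subseteq> V"
    and inside: "\<forall>e\<in>E. e \<inter> X = {} \<longrightarrow> (\<exists>P\<in>Ps. e \<subseteq> P)"
    using W unfolding tutte_berge_witness_def by auto
  have "1 \<le> x" using X G XV unfolding x_def by (meson card_0_eq graph_on_finite_subset less_one not_le)
  have parts: "(\<Sum>P\<in>Ps. card P div 2) \<le> s - x" "s - x < s" "x \<le> s"
    using budget \<open>1 \<le> x\<close> unfolding x_def by linarith+
  moreover have "int (s - x) * (2 * int s - int (s - x) - 2) \<le> 2 * (excess s - excess x) + 1"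
    using excess_diff_ge[of "s - x" s] parts by simp
  ultimately have "int (\<Sum>P\<in>Ps. card {e\<in>E. e \<subseteq> P}) \<le> excess s - excess x"
    using c4free_parts_edges_le[OF G C Ps] s by blast
  moreover have "card {e\<in>E. e \<inter> X \<noteq> {}} \<le> (x choose 2) + x div 2 + (card V - x)"
    using c4free_edges_meeting[OF G C XV] card_Diff_subset[OF graph_on_finite_subset[OF G XV] XV]
    unfolding x_def by simp
  moreover have "card E \<le> card {e\<in>E. e \<inter> X \<noteq> {}} + (\<Sum>P\<in>Ps. card {e\<in>E. e \<subseteq> P})"
    using card_edges_le_barrier[OF graph_on_finite_edges[OF G] Ps(1) inside] .
  moreover have "x \<le> card V" using G XV unfolding x_def by (meson card_mono graph_on_def)
  ultimately show ?thesis unfolding excess_def by linarith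
qed

lemma c4free_matching_edges_le:
  assumes G: "graph_on V E" and C: "c4free E" and s: "12 \<le> s"
    and matching_le: "\<And>M. M \<subseteq> E \<Longrightarrow> matching M \<Longrightarrow> card M \<le> s"
  shows "int (card E) \<le> int (card V) + excess s"
proof -
  obtain X Ps where W: "tutte_berge_witness V E X Ps" using tutte_berge_witness_exists[OF G] by blast
  then have budget: "card X + (\<Sum>P\<in>Ps. card P div 2) \<le> s"
    using matching_le unfolding tutte_berge_witness_def by (meson le_trans)
  show ?thesis
  proof (cases "X = {}")
    case True
    then show ?thesis using c4free_edges_le_empty_barrier[OF G C _ _ s] W budget by simp
  next
    case False
    then show ?thesis using c4free_edges_le_barrier[OF G C W _ budget s] by blast
  qed
qed

section \<open>Forbidden subgraphs\<close>

lemma graph_on_if_is_graph: "is_graph n G \<Longrightarrow> graph_on {..<n} G"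
  unfolding is_graph_def graph_on_def by auto

lemma c4free_intro:
  assumes "\<And>a b c d. a \<noteq> b \<Longrightarrow> c \<noteq> d \<Longrightarrow> {a,c} \<in> E \<Longrightarrow> {b,c} \<in> E \<Longrightarrow> {a,d} \<in> E \<Longrightarrow> {b,d} \<in> E
      \<Longrightarrow> False"
  shows "c4free E"
  unfolding c4free_def
proof (intro allI impI)
  fix a b :: 'a assume "a \<noteq> b"
  then have "c = d" if "c \<in> nbr E a \<inter> nbr E b" "d \<in> nbr E a \<inter> nbr E b" for c d
    using assms[of a b c d] that unfolding nbr_def by blast
  then show "card (nbr E a \<inter> nbr E b) \<le> 1"
    by (metis card.infinite card_le_Suc0_iff_eq One_nat_def zero_le)
qed

lemma subgraph_K22_iff:
  assumes G: "is_graph n G"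
  shows "subgraph_of K22 G \<longleftrightarrow> \<not> c4free G"
proof
  assume "subgraph_of K22 G"
  then obtain f where f: "inj_on f {0,1,2,3}" "\<forall>e\<in>K22. f ` e \<in> G"
    unfolding subgraph_of_def K22_def by (auto simp: insert_commute)
  have "{f 0, f 2} \<in> G" "{f 0, f 3} \<in> G" "{f 1, f 2} \<in> G" "{f 1, f 3} \<in> G"
    using f(2) unfolding K22_def by auto
  then have "{f 2, f 3} \<subseteq> nbr G (f 0) \<inter> nbr G (f 1)" unfolding nbr_def by blast
  moreover have "finite (nbr G (f 0) \<inter> nbr G (f 1))"
    using nbr_subset[OF graph_on_if_is_graph[OF G]] by (meson finite_Int finite_lessThan finite_subset)
  moreover have "f 0 \<noteq> f 1" "f 2 \<noteq> f 3" using f(1) unfolding inj_on_def by auto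
  ultimately have "2 \<le> card (nbr G (f 0) \<inter> nbr G (f 1))"
    using card_mono[of _ "{f 2, f 3}"] by fastforce
  then show "\<not> c4free G" using \<open>f 0 \<noteq> f 1\<close> unfolding c4free_def by force
next
  assume "\<not> c4free G"
  then obtain a b where ab: "a \<noteq> b" "\<not> card (nbr G a \<inter> nbr G b) \<le> 1" unfolding c4free_def by blast
  then obtain c d where cd: "c \<in> nbr G a \<inter> nbr G b" "d \<in> nbr G a \<inter> nbr G b" "c \<noteq> d"
    by (metis One_nat_def card_le_Suc0_iff_eq card.infinite zero_le)
  have edges: "{a,c} \<in> G" "{b,c} \<in> G" "{a,d} \<in> G" "{b,d} \<in> G" using cd unfolding nbr_def by auto
  then have "a \<noteq> c" "b \<noteq> c" "a \<noteq> d" "b \<noteq> d"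
    using not_in_nbr_self[OF graph_on_if_is_graph[OF G]] unfolding nbr_def by blast+
  define f where "f i = (if i = (0::nat) then a else if i = 1 then b else if i = 2 then c else d)" for i
  have "inj_on f (\<Union>K22)" unfolding K22_def f_def inj_on_def using ab cd(3) \<open>a \<noteq> c\<close> \<open>b \<noteq> c\<close> \<open>a \<noteq> d\<close> \<open>b \<noteq> d\<close> by auto
  moreover have "\<forall>e\<in>K22. f ` e \<in> G" unfolding K22_def f_def using edges by (auto simp: insert_commute)
  ultimately show "subgraph_of K22 G" unfolding subgraph_of_def by blast
qed

lemma Union_matching_graph: "\<Union>(matching_graph k) = {..<2*k}"
proof
  show "{..<2*k} \<subseteq> \<Union>(matching_graph k)"
  proof
    fix j assume "j \<in> {..<2*k}"
    then have "j div 2 < k" "j \<in> {2*(j div 2), 2*(j div 2) + 1}" by auto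
    then show "j \<in> \<Union>(matching_graph k)" unfolding matching_graph_def by blast
  qed
qed (auto simp: matching_graph_def)

lemma matching_of_subgraph_matching_graph:
  assumes "subgraph_of (matching_graph k) G"
  shows "\<exists>M\<subseteq>G. matching M \<and> card M = k"
proof -
  obtain f where f: "inj_on f {..<2*k}" "\<forall>e\<in>matching_graph k. f ` e \<in> G"
    using assms unfolding subgraph_of_def Union_matching_graph by blast
  define edge where "edge i = f ` {2*i, 2*i + 1}" for i
  have disjoint: "edge i \<inter> edge j = {}" if ij: "i < k" "j < k" "i \<noteq> j" for i j
  proof -
    have "f x \<noteq> f y" if "x \<in> {2*i, 2*i + 1}" "y \<in> {2*j, 2*j + 1}" for x y
    proof
      assume "f x = f y"
      moreover have "x \<in> {..<2*k}" "y \<in> {..<2*k}" using that ij by auto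
      ultimately have "x = y" by (rule inj_onD[OF f(1)])
      then show False using that ij by auto
    qed
    then show ?thesis unfolding edge_def by blast
  qed
  have "edge ` {..<k} \<subseteq> G" using f(2) unfolding edge_def matching_graph_def by blast
  moreover have "matching (edge ` {..<k})"
    unfolding matching_def pairwise_def disjnt_def using disjoint by auto
  moreover have "inj_on edge {..<k}"
    using disjoint unfolding inj_on_def edge_def by blast
  then have "card (edge ` {..<k}) = k" by (simp add: card_image)
  ultimately show ?thesis by blast
qed

lemma subgraph_matching_graph_of_matching:
  assumes G: "is_graph n G" and M: "M \<subseteq> G" "matching M" "card M = k"
  shows "subgraph_of (matching_graph k) G"
proof -
  have "finite M" using G M(1) unfolding is_graph_def by (meson finite_Pow_iff finite_lessThan
        finite_subset subsetI PowI)
  then obtain h where h: "bij_betw h {..<k} M"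
    using M(3) ex_bij_betw_nat_finite[of M] by (auto simp: atLeast0LessThan)
  have "\<exists>u v. e = {u,v} \<and> u \<noteq> v" if "e \<in> M" for e
    using G M(1) that unfolding is_graph_def by (meson card_2_iff subsetD)
  then obtain u v where uv: "\<And>e. e \<in> M \<Longrightarrow> e = {u e, v e} \<and> u e \<noteq> v e" by metis
  define f where "f j = (if even j then u (h (j div 2)) else v (h (j div 2)))" for j
  have edge: "f ` {2*i, 2*i + 1} = h i" if "i < k" for i
    using uv[of "h i"] h that unfolding f_def bij_betw_def by auto
  have "inj_on f {..<2*k}"
  proof (rule inj_onI)
    fix j j' assume j: "j \<in> {..<2*k}" "j' \<in> {..<2*k}" and eq: "f j = f j'"
    have "j div 2 < k" "j' div 2 < k" using j by auto
    moreover have "j \<in> {2*(j div 2), 2*(j div 2) + 1}" "j' \<in> {2*(j' div 2), 2*(j' div 2) + 1}" by auto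
    ultimately have "f j \<in> h (j div 2)" "f j' \<in> h (j' div 2)" using edge by blast+
    moreover have "h (j div 2) \<in> M" "h (j' div 2) \<in> M" using h j unfolding bij_betw_def by auto
    ultimately have "h (j div 2) = h (j' div 2)" using eq M(2) matching_edges_disjoint by metis
    then have "j div 2 = j' div 2" using h j unfolding bij_betw_def inj_on_def by auto
    moreover have "even j = even j'"
      using eq uv[of "h (j div 2)"] \<open>h (j div 2) \<in> M\<close> \<open>j div 2 = j' div 2\<close> unfolding f_def by (auto split: if_splits)
    ultimately show "j = j'" by (metis div_mult_mod_eq even_iff_mod_2_eq_zero odd_iff_mod_2_eq_one)
  qed
  moreover have "f ` e \<in> G" if e: "e \<in> matching_graph k" for e
  proof -
    obtain i where "i < k" "e = {2*i, 2*i + 1}" using e unfolding matching_graph_def by blast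
    then show ?thesis using edge h M(1) unfolding bij_betw_def by auto
  qed
  ultimately show ?thesis unfolding subgraph_of_def Union_matching_graph by blast
qed

lemma card_matching_le_cover:
  assumes "matching M" "finite S" "\<forall>e\<in>M. e \<inter> S \<noteq> {}"
  shows "card M \<le> card S"
proof -
  have "\<forall>e\<in>M. \<exists>x. x \<in> e \<inter> S" using assms(3) by blast
  then obtain g where g: "\<forall>e\<in>M. g e \<in> e \<inter> S" by metis
  have "inj_on g M"
  proof (rule inj_onI)
    fix e e' assume "e \<in> M" "e' \<in> M" "g e = g e'"
    then show "e = e'" using g matching_edges_disjoint[OF assms(1), of e e' "g e"] by auto
  qed
  moreover have "g ` M \<subseteq> S" using g by blast
  ultimately show ?thesis using assms(2) by (rule card_inj_on_le)
qed

section \<open>The extremal construction\<close>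

definition pairs :: "nat \<Rightarrow> nat set set" where
  "pairs s = {p. p \<subseteq> {..<s} \<and> card p = 2}"

lemma card_pairs: "card (pairs s) = s choose 2"
  unfolding pairs_def using n_subsets[of "{..<s}" 2] by simp

text \<open>The extremal graph: low vertices {..<s}, one private common neighbour w p for each pair p of low
  vertices, a maximal matching on the low vertices, and all remaining vertices hanging at vertex 0.\<close>
locale c4free_construction =
  fixes s n :: nat and w :: "nat set \<Rightarrow> nat"
  assumes s: "1 \<le> s" "s + (s choose 2) \<le> n"
    and w_inj: "inj_on w (pairs s)" and w_range: "w ` pairs s \<subseteq> {s..<n}"
begin

definition rest :: "nat set" where
  "rest = {s..<n} - w ` pairs s"

definition pair_edges :: "nat set set" where
  "pair_edges = (\<lambda>(p, a). {a, w p}) ` (SIGMA p:pairs s. p)"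

definition low_edges :: "nat set set" where
  "low_edges = (\<lambda>i. {2*i, 2*i + 1}) ` {..<s div 2}"

definition pendant_edges :: "nat set set" where
  "pendant_edges = (\<lambda>r. {0, r}) ` rest"

definition graph :: "nat set set" where
  "graph = pair_edges \<union> low_edges \<union> pendant_edges"

lemma pairs_lt: "p \<in> pairs s \<Longrightarrow> a \<in> p \<Longrightarrow> a < s"
  unfolding pairs_def by auto

lemma w_bounds: "p \<in> pairs s \<Longrightarrow> s \<le> w p \<and> w p < n"
  using w_range by auto

lemma rest_bounds: "r \<in> rest \<Longrightarrow> s \<le> r \<and> r < n \<and> r \<notin> w ` pairs s"
  unfolding rest_def by auto

lemma graph_cases:
  assumes "e \<in> graph"
  obtains (pair) p a where "p \<in> pairs s" "a \<in> p" "e = {a, w p}"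
    | (low) i where "2*i + 1 < s" "e = {2*i, 2*i + 1}"
    | (pendant) r where "r \<in> rest" "e = {0, r}"
proof -
  have "2*i + 1 < s \<longleftrightarrow> i < s div 2" for i by linarith
  then show ?thesis
    using assms that unfolding graph_def pair_edges_def low_edges_def pendant_edges_def by blast
qed

lemma edge_meets_low: "e \<in> graph \<Longrightarrow> e \<inter> {..<s} \<noteq> {}"
  by (elim graph_cases) (use s(1) pairs_lt in auto)

lemma low_vertex_one_low_neighbour:
  assumes "{y, a} \<in> graph" "{y, b} \<in> graph" "y < s" "a < s" "b < s"
  shows "a = b"
proof -
  have "{y, c} = {2 * (y div 2), 2 * (y div 2) + 1}" if "{y, c} \<in> graph" "c < s" for c
    using that(1)
  proof (cases rule: graph_cases)
    case (pair p a)
    then show ?thesis using that(2) assms(3) w_bounds[OF pair(1)] by (auto simp: doubleton_eq_iff)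
  next
    case (pendant r)
    then show ?thesis using that(2) assms(3) rest_bounds[OF pendant(1)] by (auto simp: doubleton_eq_iff)
  next
    case (low i)
    then show ?thesis by (auto simp: doubleton_eq_iff)
  qed
  then have "{y, a} = {y, b}" using assms by metis
  then show ?thesis by (auto simp: doubleton_eq_iff)
qed

lemma high_vertex_neighbour:
  assumes "{x, y} \<in> graph" "s \<le> y"
  shows "(\<exists>p\<in>pairs s. x \<in> p \<and> y = w p) \<or> (x = 0 \<and> y \<in> rest)"
  using assms(1)
proof (cases rule: graph_cases)
  case (pair p a)
  then show ?thesis using assms(2) pairs_lt[of p a] by (auto simp: doubleton_eq_iff)
next
  case (pendant r)
  then show ?thesis using assms(2) s(1) by (auto simp: doubleton_eq_iff)
qed (use assms(2) in \<open>auto simp: doubleton_eq_iff\<close>)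

lemma high_common_neighbour:
  assumes "{a, y} \<in> graph" "{b, y} \<in> graph" "s \<le> y" "a \<noteq> b"
  shows "y = w {a, b}"
proof -
  have "y \<notin> rest \<or> y \<notin> w ` pairs s" using rest_bounds by blast
  then obtain p q where pq: "p \<in> pairs s" "q \<in> pairs s" "a \<in> p" "b \<in> q" "y = w p" "y = w q"
    using high_vertex_neighbour[OF assms(1,3)] high_vertex_neighbour[OF assms(2,3)] assms(4) by blast
  then have "p = q" using w_inj unfolding inj_on_def by metis
  then have "{a, b} \<subseteq> p" "card p = 2" using pq unfolding pairs_def by auto
  then have "p = {a, b}" using card_subset_eq[of p "{a, b}"] assms(4) card.infinite by fastforce
  then show ?thesis using pq(5) by simp
qed

lemma c4free_graph: "c4free graph"
proof (rule c4free_intro)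
  fix a b c d assume ab: "a \<noteq> b" and cd: "c \<noteq> d"
    and edges: "{a,c} \<in> graph" "{b,c} \<in> graph" "{a,d} \<in> graph" "{b,d} \<in> graph"
  have low: "x < s \<or> y < s" if "{x,y} \<in> graph" for x y using edge_meets_low[OF that] by auto
  have hub: "x = w {a,b}" if "x \<in> {c,d}" "s \<le> x" for x
    using high_common_neighbour[of a x b] that edges ab by auto
  show False
  proof (cases "s \<le> c \<or> s \<le> d")
    case True
    then have "a < s" "b < s" using low edges by (meson not_le)+
    show False
    proof (cases "s \<le> c \<and> s \<le> d")
      case True
      then show False using hub[of c] hub[of d] cd by simp
    next
      case False
      then obtain x where "x \<in> {c,d}" "x < s" by force
      then show False using low_vertex_one_low_neighbour[of x a b] \<open>a < s\<close> \<open>b < s\<close> edges ab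
        by (auto simp: insert_commute)
    qed
  next
    case False
    then have "c < s" "d < s" by auto
    have "s \<le> x" if "x \<in> {a,b}" for x
    proof (rule ccontr)
      assume "\<not> s \<le> x"
      moreover have "{x,c} \<in> graph" "{x,d} \<in> graph" using that edges by auto
      ultimately show False using low_vertex_one_low_neighbour[of x c d] \<open>c < s\<close> \<open>d < s\<close> cd by simp
    qed
    moreover have "{c,x} \<in> graph" "{d,x} \<in> graph" if "x \<in> {a,b}" for x
      using that edges by (auto simp: insert_commute)
    ultimately have "a = w {c,d}" "b = w {c,d}" using high_common_neighbour[OF _ _ _ cd] by blast+
    then show False using ab by simp
  qed
qed

lemma is_graph_graph: "is_graph n graph"
  unfolding is_graph_def
proof
  fix e assume "e \<in> graph"
  then show "e \<subseteq> {..<n} \<and> card e = 2"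
  proof (cases rule: graph_cases)
    case (pair p a)
    then show ?thesis using pairs_lt[OF pair(1,2)] w_bounds[OF pair(1)] s by auto
  next
    case (pendant r)
    then show ?thesis using rest_bounds[OF pendant(1)] s by auto
  qed (use s in auto)
qed

lemma card_graph: "card graph = n + (s choose 2) - (s + 1) div 2"
proof -
  have fin_pairs: "finite (pairs s)" "\<forall>p\<in>pairs s. finite p"
    unfolding pairs_def by (auto intro: finite_subset[of _ "Pow {..<s}"] finite_subset)
  have "inj_on (\<lambda>(p, a). {a, w p}) (SIGMA p:pairs s. p)"
  proof (rule inj_onI, clarify)
    fix p a q b assume "p \<in> pairs s" "a \<in> p" "q \<in> pairs s" "b \<in> q" "{a, w p} = {b, w q}"
    then show "p = q \<and> a = b"
      using pairs_lt w_bounds w_inj unfolding inj_on_def by (metis doubleton_eq_iff not_le)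
  qed
  then have "card pair_edges = (\<Sum>p\<in>pairs s. card p)"
    unfolding pair_edges_def using fin_pairs by (simp add: card_image)
  also have "\<dots> = 2 * (s choose 2)" using card_pairs unfolding pairs_def by simp
  finally have card_pair: "card pair_edges = 2 * (s choose 2)" .
  have "inj_on (\<lambda>i. {2*i, 2*i + 1}) {..<s div 2}" by (rule inj_onI) (auto simp: doubleton_eq_iff)
  then have card_low: "card low_edges = s div 2" unfolding low_edges_def by (simp add: card_image)
  have "inj_on (\<lambda>r. {0, r}) rest" using rest_bounds s(1) by (intro inj_onI) (auto simp: doubleton_eq_iff)
  moreover have "card rest = n - s - (s choose 2)"
    unfolding rest_def using w_range w_inj card_pairs fin_pairs(1)
    by (simp add: card_Diff_subset card_image)
  ultimately have card_pendant: "card pendant_edges = n - s - (s choose 2)"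
    unfolding pendant_edges_def by (simp add: card_image)
  have "pair_edges \<inter> low_edges = {}"
    using w_bounds unfolding pair_edges_def low_edges_def by (fastforce simp: doubleton_eq_iff)
  moreover have "(pair_edges \<union> low_edges) \<inter> pendant_edges = {}"
    using w_bounds pairs_lt rest_bounds s(1)
    unfolding pair_edges_def low_edges_def pendant_edges_def by (fastforce simp: doubleton_eq_iff)
  moreover have "finite pair_edges" "finite low_edges" "finite pendant_edges"
    unfolding pair_edges_def low_edges_def pendant_edges_def rest_def using fin_pairs by auto
  ultimately have "card graph = card pair_edges + card low_edges + card pendant_edges"
    unfolding graph_def by (simp add: card_Un_disjoint)
  then show ?thesis using card_pair card_low card_pendant s(2) by simp
qed

end

lemma c4free_construction_exists:
  assumes "1 \<le> s" "s + (s choose 2) \<le> n"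
  shows "\<exists>w. c4free_construction s n w"
proof -
  have "card (pairs s) \<le> card {s..<n}" using assms card_pairs by simp
  then obtain w where "w ` pairs s \<subseteq> {s..<n}" "inj_on w (pairs s)"
    using card_le_inj[of "pairs s" "{s..<n}"] unfolding pairs_def by auto
  then have "c4free_construction s n w" using assms by unfold_locales auto
  then show ?thesis by blast
qed

lemma ex_eqI:
  assumes upper: "\<And>G. is_graph n G \<Longrightarrow> \<forall>H\<in>F. \<not> subgraph_of H G \<Longrightarrow> card G \<le> B"
    and witness: "is_graph n G" "\<forall>H\<in>F. \<not> subgraph_of H G" "card G = B"
  shows "ex n F = B"
  unfolding ex_def
proof (rule Max_eqI)
  have "{card G |G. is_graph n G \<and> (\<forall>H\<in>F. \<not> subgraph_of H G)} \<subseteq> card ` Pow (Pow {..<n})"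
    unfolding is_graph_def by auto
  then show "finite {card G |G. is_graph n G \<and> (\<forall>H\<in>F. \<not> subgraph_of H G)}"
    by (rule finite_subset) simp
qed (use upper witness in auto)

lemma ceiling_half: "\<lceil>real s / 2\<rceil> = int ((s + 1) div 2)"
  by (cases "even s") (auto elim!: evenE oddE intro!: ceiling_unique)

lemma card_matching_le_if_not_subgraph:
  assumes G: "is_graph n G" and free: "\<not> subgraph_of (matching_graph (s + 1)) G"
    and M: "M \<subseteq> G" "matching M"
  shows "card M \<le> s"
proof (rule ccontr)
  assume "\<not> card M \<le> s"
  then have "s + 1 \<le> card M" by simp
  then obtain M' where M': "M' \<subseteq> M" "card M' = s + 1" by (rule obtain_subset_with_card_n)
  moreover have "matching M'" using M(2) M'(1) by (rule matching_subset)
  ultimately show False using subgraph_matching_graph_of_matching[OF G, of M'] M(1) free by blast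
qed

lemma not_subgraph_matching_graph_if_cover:
  assumes "\<forall>e\<in>G. e \<inter> {..<s} \<noteq> {}"
  shows "\<not> subgraph_of (matching_graph (s + 1)) G"
proof
  assume "subgraph_of (matching_graph (s + 1)) G"
  then obtain M where M: "M \<subseteq> G" "matching M" "card M = s + 1"
    using matching_of_subgraph_matching_graph by blast
  then have "\<forall>e\<in>M. e \<inter> {..<s} \<noteq> {}" using assms by blast
  then have "card M \<le> card {..<s}" using card_matching_le_cover[OF M(2)] by blast
  then show False using M(3) by simp
qed

lemma free_graph_card_le:
  assumes s: "12 \<le> s" and G: "is_graph n G"
    and free: "\<not> subgraph_of K22 G" "\<not> subgraph_of (matching_graph (s + 1)) G"
  shows "int (card G) \<le> int n + excess s"
proof -
  have "c4free G" using subgraph_K22_iff[OF G] free(1) by blast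
  moreover have "card M \<le> s" if "M \<subseteq> G" "matching M" for M
    using card_matching_le_if_not_subgraph[OF G free(2) that] .
  ultimately show ?thesis using c4free_matching_edges_le[OF graph_on_if_is_graph[OF G]] s by simp
qed

lemma free_graph_exists:
  assumes "1 \<le> s" "s + (s choose 2) \<le> n"
  obtains G where "is_graph n G" "\<not> subgraph_of K22 G" "\<not> subgraph_of (matching_graph (s + 1)) G"
    "int (card G) = int n + excess s"
proof -
  obtain w where "c4free_construction s n w" using c4free_construction_exists[OF assms] by blast
  then interpret c4free_construction s n w .
  have "\<not> subgraph_of K22 graph" using subgraph_K22_iff[OF is_graph_graph] c4free_graph by blast
  moreover have "\<not> subgraph_of (matching_graph (s + 1)) graph"
    using not_subgraph_matching_graph_if_cover edge_meets_low by blast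
  moreover have "int (card graph) = int n + excess s"
    using card_graph assms unfolding excess_def by linarith
  ultimately show ?thesis by (rule that[OF is_graph_graph])
qed

theorem theorem1p3:
  fixes s n :: nat
  assumes "s \<ge> 12" and "n \<ge> (s choose 2) + s + 1"
  shows "int (ex n {K22, matching_graph (s+1)})
           = int n + int (s choose 2) - \<lceil>real s / 2\<rceil>"
proof -
  have "1 \<le> s" "s + (s choose 2) \<le> n" using assms by simp_all
  then obtain G where G: "is_graph n G" "\<not> subgraph_of K22 G"
    "\<not> subgraph_of (matching_graph (s + 1)) G" "int (card G) = int n + excess s"
    by (rule free_graph_exists)
  have "ex n {K22, matching_graph (s+1)} = card G"
  proof (rule ex_eqI)
    fix G' assume G': "is_graph n G'" "\<forall>H\<in>{K22, matching_graph (s + 1)}. \<not> subgraph_of H G'"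
    then have "int (card G') \<le> int n + excess s" using free_graph_card_le[OF assms(1)] by simp
    then show "card G' \<le> card G" using G(4) by simp
  qed (use G in auto)
  then show ?thesis using G(4) unfolding excess_def ceiling_half by simp
qed

end
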